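(* Let $A=\{f_1,\cdots,f_s\}\subset H^2_{\mathbb C^n}$ and let $F:=[f_1,\cdots,f_s]$ be the $n\times s$ matrix function with these columns. Then $E^*_A=H^2_{\mathbb C^n}\ominus\ker H_{\bar zF^*}$.
   Context: $S$ is the shift $Sf=zf$ on $H^2_{\mathbb C^n}$ and $S^*$ its adjoint; $E^*_A$ is the closed linear span of $\{S^{*k}f_i:k\ge0,\ 1\le i\le s\}$. $F^*(\zeta)=F(\zeta)^*$, so $\bar zF^*$ is an $s\times n$ matrix function with entries in $L^2$. For $\Phi\in L^2_{M_{s\times n}}$, $\ker H_\Phi=\{h\in H^2_{\mathbb C^n}:\Phi h\in H^1_{\mathbb C^s}\}$ is the kernel of the block Hankel operator $H_\Phi h=J(I-P)(\Phi h)$. *)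

theory Defs
  imports "HOL-Analysis.Analysis"
begin

text \<open>Functions on the unit circle are parametrised by t in [0, 2 pi] (zeta = exp(i t)).
  Vector-valued functions take values in complex^'n.\<close>

definition circ :: "real set" where "circ = {0..2*pi}"

definition fcoeff :: "(real \<Rightarrow> complex) \<Rightarrow> int \<Rightarrow> complex" where
  "fcoeff g k = (1 / (2*pi)) * (LINT t:circ|lborel. g t * exp (- \<i> * of_int k * of_real t))"

definition vfcoeff :: "(real \<Rightarrow> complex^'m) \<Rightarrow> int \<Rightarrow> complex^'m" where
  "vfcoeff h k = (\<chi> j. fcoeff (\<lambda>t. h t $ j) k)"

definition Lp_circ :: "nat \<Rightarrow> (real \<Rightarrow> complex^'m) \<Rightarrow> bool" where
  "Lp_circ p h \<longleftrightarrow> set_borel_measurable lborel circ h \<and>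
     set_integrable lborel circ (\<lambda>t. norm (h t) ^ p)"

definition Hp :: "nat \<Rightarrow> (real \<Rightarrow> complex^'m) set" where
  "Hp p = {h. Lp_circ p h \<and> (\<forall>k::int. k < 0 \<longrightarrow> vfcoeff h k = 0)}"

definition ip2 :: "(real \<Rightarrow> complex^'m) \<Rightarrow> (real \<Rightarrow> complex^'m) \<Rightarrow> complex" where
  "ip2 g h = (1 / (2*pi)) * (LINT t:circ|lborel. (\<Sum>j\<in>UNIV. g t $ j * cnj (h t $ j)))"

definition dist2 :: "(real \<Rightarrow> complex^'m) \<Rightarrow> (real \<Rightarrow> complex^'m) \<Rightarrow> real" where
  "dist2 g h = sqrt ((1 / (2*pi)) * (LINT t:circ|lborel. norm (g t - h t) ^ 2))"

text \<open>Adjoint of the shift: (S^* f)(z) = conj z (f(z) - f(0)).\<close>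
definition Sstar :: "(real \<Rightarrow> complex^'m) \<Rightarrow> (real \<Rightarrow> complex^'m)" where
  "Sstar f = (\<lambda>t. exp (- \<i> * of_real t) *s (f t - vfcoeff f 0))"

definition Estar :: "('s::finite \<Rightarrow> real \<Rightarrow> complex^'n) \<Rightarrow> (real \<Rightarrow> complex^'n) set" where
  "Estar f = {g \<in> Hp 2. \<forall>\<epsilon>>0. \<exists>(N::nat) (c::'s \<Rightarrow> nat \<Rightarrow> complex).
      dist2 g (\<lambda>t. \<Sum>i\<in>UNIV. \<Sum>k<N. c i k *s (Sstar ^^ k) (f i) t) < \<epsilon>}"

definition Fmat :: "('s::finite \<Rightarrow> real \<Rightarrow> complex^'n) \<Rightarrow> real \<Rightarrow> complex^'s^'n" where
  "Fmat f t = (\<chi> j i. f i t $ j)"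

definition zbarFstar :: "('s::finite \<Rightarrow> real \<Rightarrow> complex^'n) \<Rightarrow> real \<Rightarrow> complex^'n^'s" where
  "zbarFstar f t = (\<chi> i j. exp (- \<i> * of_real t) * cnj (Fmat f t $ j $ i))"

text \<open>Kernel of the block Hankel operator H_Phi: {h in H^2 : Phi h in H^1}.\<close>
definition kerHankel :: "(real \<Rightarrow> complex^'n^'s) \<Rightarrow> (real \<Rightarrow> complex^'n) set" where
  "kerHankel Phi = {h \<in> Hp 2. (\<lambda>t. Phi t *v h t) \<in> Hp 1}"

definition H2_ominus :: "(real \<Rightarrow> complex^'n) set \<Rightarrow> (real \<Rightarrow> complex^'n) set" where
  "H2_ominus K = {g \<in> Hp 2. \<forall>h\<in>K. ip2 g h = 0}"

end

(*
  E*_A is the L2-closure of the linear span W of the functions S*^k f_i.  On H^2 the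
  backward shift S* is adjoint to multiplication by z, so <h, S*^k f_i> is, up to 2 pi, the Fourier
  coefficient of index -k of the scalar function <h, f_i>; since the i-th entry of conj(z) F^* h is
  conj(z) <h, f_i>, the function h in H^2 lies in the kernel of the Hankel operator exactly when it
  is orthogonal to W.  The theorem thus becomes the Hilbert space identity
    closure W = { g in H. g is orthogonal to every h in H that is orthogonal to W }
  for a subspace W of the closed subspace H = H^2 of L2.  This is proved via orthogonal projection
  onto closure W, which exists because L2 is complete (Riesz-Fischer).
*)
theory Submission
  imports Defs "HOL-Analysis.Kronecker_Approximation_Theorem"
begin

section \<open>Square-integrable vector-valued functions\<close>

definition cinner :: "complex^'n \<Rightarrow> complex^'n \<Rightarrow> complex" where
  "cinner x y = (\<Sum>j\<in>UNIV. x $ j * cnj (y $ j))"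

lemma cinner_self: "cinner x x = of_real (norm x ^ 2)"
proof -
  have "norm x ^ 2 = (\<Sum>j\<in>UNIV. norm (x $ j) ^ 2)"
    unfolding norm_vec_def L2_set_def by (simp add: sum_nonneg)
  then show ?thesis
    unfolding cinner_def by (simp add: complex_norm_square del: of_real_power)
qed

lemma norm_cinner_le: "norm (cinner x y) \<le> norm x * norm y"
proof -
  have "norm (cinner x y) \<le> (\<Sum>j\<in>UNIV. \<bar>norm (x $ j)\<bar> * \<bar>norm (y $ j)\<bar>)"
    unfolding cinner_def by (rule order_trans[OF norm_sum]) (simp add: norm_mult)
  also have "\<dots> \<le> L2_set (\<lambda>j. norm (x $ j)) UNIV * L2_set (\<lambda>j. norm (y $ j)) UNIV"
    by (rule L2_set_mult_ineq)
  finally show ?thesis by (simp add: norm_vec_def)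
qed

lemma cinner_add_left: "cinner (x + y) z = cinner x z + cinner y z"
  unfolding cinner_def by (simp add: distrib_right sum.distrib)

lemma cinner_diff_left: "cinner (x - y) z = cinner x z - cinner y z"
  unfolding cinner_def by (simp add: left_diff_distrib sum_subtractf)

lemma cinner_scaleV_left: "cinner (c *s x) z = c * cinner x z"
  unfolding cinner_def by (simp add: sum_distrib_left mult_ac)

lemma cinner_sum_left: "cinner (\<Sum>i\<in>I. x i) z = (\<Sum>i\<in>I. cinner (x i) z)"
  unfolding cinner_def sum_component sum_distrib_right by (rule sum.swap)

lemma cinner_commute: "cinner y x = cnj (cinner x y)"
  unfolding cinner_def by (simp add: mult.commute)

lemma norm_scaleV: "norm (c *s (x::complex^'n)) = norm c * norm x"
  by (simp add: norm_vec_def L2_set_def norm_mult power_mult_distrib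
      flip: sum_distrib_left real_sqrt_mult) (simp add: real_sqrt_mult)

lemma borel_measurable_vec_nth[measurable (raw)]:
  fixes f :: "'a \<Rightarrow> 'b::real_normed_vector^'n"
  assumes "f \<in> borel_measurable M"
  shows "(\<lambda>x. f x $ j) \<in> borel_measurable M"
  by (rule borel_measurable_continuous_on[OF _ assms]) (intro continuous_intros)

lemma borel_measurable_cnj[measurable (raw)]:
  assumes "f \<in> borel_measurable M"
  shows "(\<lambda>x. cnj (f x)) \<in> borel_measurable M"
  by (rule borel_measurable_continuous_on[OF _ assms]) (intro continuous_intros)

lemma borel_measurable_scaleV[measurable (raw)]:
  fixes e :: "'a \<Rightarrow> complex" and g :: "'a \<Rightarrow> complex^'n"
  assumes "e \<in> borel_measurable M" "g \<in> borel_measurable M"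
  shows "(\<lambda>t. e t *s g t) \<in> borel_measurable M"
proof -
  have "continuous_on UNIV (\<lambda>x::complex \<times> (complex^'n). fst x *s snd x)"
    unfolding vector_scalar_mult_def by (intro continuous_on_vec_lambda continuous_intros)
  then show ?thesis
    using borel_measurable_continuous_Pair[OF assms] by blast
qed

lemma borel_measurable_vec:
  fixes F :: "'a \<Rightarrow> 'b::euclidean_space^'n"
  assumes "\<And>i. (\<lambda>x. F x $ i) \<in> borel_measurable M"
  shows "F \<in> borel_measurable M"
  unfolding borel_measurable_euclidean_space[where f = F]
proof
  fix b :: "'b^'n"
  assume "b \<in> Basis"
  then obtain i u where b: "b = axis i u" "u \<in> Basis"
    unfolding Basis_vec_def by auto
  have [measurable]: "(\<lambda>x. F x $ i) \<in> borel_measurable M"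
    by (rule assms)
  have "(\<lambda>x. inner (F x $ i) u) \<in> borel_measurable M"
    by measurable
  then show "(\<lambda>x. inner (F x) b) \<in> borel_measurable M"
    by (simp add: b inner_axis)
qed

text \<open>Square-integrable functions are not identified up to null sets: \<open>norm_L2\<close> is only a
  seminorm, and every notion below is stated for it.\<close>

definition L2 :: "'a measure \<Rightarrow> ('a \<Rightarrow> complex^'n) set" where
  "L2 M = {h \<in> borel_measurable M. integrable M (\<lambda>t. norm (h t) ^ 2)}"

definition inner_L2 :: "'a measure \<Rightarrow> ('a \<Rightarrow> complex^'n) \<Rightarrow> ('a \<Rightarrow> complex^'n) \<Rightarrow> complex" where
  "inner_L2 M g h = (\<integral>t. cinner (g t) (h t) \<partial>M)"

definition norm_L2 :: "'a measure \<Rightarrow> ('a \<Rightarrow> complex^'n) \<Rightarrow> real" where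
  "norm_L2 M h = sqrt (\<integral>t. norm (h t) ^ 2 \<partial>M)"

lemma L2_D:
  assumes "h \<in> L2 M"
  shows "h \<in> borel_measurable M" "integrable M (\<lambda>t. norm (h t) ^ 2)"
  using assms by (auto simp: L2_def)

lemma Cauchy_Schwarz_integral:
  fixes a b :: "'a \<Rightarrow> real"
  assumes [measurable]: "a \<in> borel_measurable M" "b \<in> borel_measurable M"
    and nonneg: "\<And>t. 0 \<le> a t" "\<And>t. 0 \<le> b t"
    and sq: "integrable M (\<lambda>t. a t ^ 2)" "integrable M (\<lambda>t. b t ^ 2)"
  shows "integrable M (\<lambda>t. a t * b t)"
    and "(\<integral>t. a t * b t \<partial>M) \<le> sqrt (\<integral>t. a t ^ 2 \<partial>M) * sqrt (\<integral>t. b t ^ 2 \<partial>M)"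
proof -
  show int: "integrable M (\<lambda>t. a t * b t)"
  proof (rule Bochner_Integration.integrable_bound[OF Bochner_Integration.integrable_add[OF sq]])
    have "a t * b t \<le> a t ^ 2 + b t ^ 2" for t
      using sum_squares_bound[of "a t" "b t"] mult_nonneg_nonneg[OF nonneg(1,2)[of t]] by linarith
    then show "AE t in M. norm (a t * b t) \<le> norm (a t ^ 2 + b t ^ 2)"
      using nonneg by auto
  qed measurable
  have "ennreal ((\<integral>t. a t * b t \<partial>M) ^ 2) = (\<integral>\<^sup>+t. ennreal (a t) * ennreal (b t) \<partial>M) ^ 2"
    using int nonneg by (simp add: nn_integral_eq_integral integral_nonneg_AE ennreal_power
        flip: ennreal_mult)
  also have "\<dots> \<le> (\<integral>\<^sup>+t. ennreal (a t) ^ 2 \<partial>M) * (\<integral>\<^sup>+t. ennreal (b t) ^ 2 \<partial>M)"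
    by (rule Cauchy_Schwarz_nn_integral) measurable
  also have "\<dots> = ennreal ((\<integral>t. a t ^ 2 \<partial>M) * (\<integral>t. b t ^ 2 \<partial>M))"
    using sq nonneg by (simp add: ennreal_power nn_integral_eq_integral integral_nonneg_AE ennreal_mult)
  finally have "(\<integral>t. a t * b t \<partial>M) ^ 2 \<le> (\<integral>t. a t ^ 2 \<partial>M) * (\<integral>t. b t ^ 2 \<partial>M)"
    by (simp add: integral_nonneg_AE)
  then show "(\<integral>t. a t * b t \<partial>M) \<le> sqrt (\<integral>t. a t ^ 2 \<partial>M) * sqrt (\<integral>t. b t ^ 2 \<partial>M)"
    by (metis real_le_rsqrt real_sqrt_mult)
qed

lemma integrable_cinner_L2:
  assumes "g \<in> L2 M" "h \<in> L2 M"
  shows "integrable M (\<lambda>t. cinner (g t) (h t))"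
proof (rule Bochner_Integration.integrable_bound)
  show "integrable M (\<lambda>t. norm (g t) * norm (h t))"
    using assms by (intro Cauchy_Schwarz_integral(1)) (auto simp: L2_def)
  have [measurable]: "g \<in> borel_measurable M" "h \<in> borel_measurable M"
    using assms by (auto simp: L2_def)
  show "(\<lambda>t. cinner (g t) (h t)) \<in> borel_measurable M"
    unfolding cinner_def by measurable
qed (auto intro: order_trans[OF norm_cinner_le])

lemma norm_inner_L2_le:
  assumes "g \<in> L2 M" "h \<in> L2 M"
  shows "norm (inner_L2 M g h) \<le> norm_L2 M g * norm_L2 M h"
proof -
  have "norm (inner_L2 M g h) \<le> (\<integral>t. norm (g t) * norm (h t) \<partial>M)"
    unfolding inner_L2_def using assms
    by (intro order_trans[OF integral_norm_bound] integral_mono norm_cinner_le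
          integrable_norm integrable_cinner_L2 Cauchy_Schwarz_integral(1))
      (auto simp: L2_def)
  also have "\<dots> \<le> norm_L2 M g * norm_L2 M h"
    unfolding norm_L2_def using assms
    by (intro Cauchy_Schwarz_integral(2)) (auto simp: L2_def)
  finally show ?thesis .
qed

lemma L2_mult:
  assumes "g \<in> L2 M" "e \<in> borel_measurable M" "\<And>t. norm (e t) \<le> B"
  shows "(\<lambda>t. e t *s g t) \<in> L2 M"
proof -
  have [measurable]: "g \<in> borel_measurable M" "e \<in> borel_measurable M"
    using assms by (auto simp: L2_def)
  have bound: "norm (e t *s g t) ^ 2 \<le> B ^ 2 * norm (g t) ^ 2" for t
  proof -
    have "norm (e t) ^ 2 \<le> B ^ 2"
      using assms(3)[of t] by (intro power_mono) auto
    then show ?thesis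
      by (simp add: norm_scaleV power_mult_distrib mult_right_mono)
  qed
  have "integrable M (\<lambda>t. norm (e t *s g t) ^ 2)"
  proof (rule Bochner_Integration.integrable_bound)
    show "integrable M (\<lambda>t. B ^ 2 * norm (g t) ^ 2)"
      using L2_D(2)[OF assms(1)] by simp
    show "AE t in M. norm (norm (e t *s g t) ^ 2) \<le> norm (B ^ 2 * norm (g t) ^ 2)"
      using bound by (simp add: abs_mult)
  qed measurable
  then show ?thesis by (simp add: L2_def)
qed

lemma L2_scaleV: "g \<in> L2 M \<Longrightarrow> (\<lambda>t. c *s g t) \<in> L2 M"
  by (rule L2_mult) auto

lemma L2_add:
  assumes "g \<in> L2 M" "h \<in> L2 M"
  shows "(\<lambda>t. g t + h t) \<in> L2 M"
proof -
  have [measurable]: "g \<in> borel_measurable M" "h \<in> borel_measurable M"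
    using assms by (auto simp: L2_def)
  have bound: "norm (g t + h t) ^ 2 \<le> 2 * norm (g t) ^ 2 + 2 * norm (h t) ^ 2" for t
  proof -
    have "norm (g t + h t) ^ 2 \<le> (norm (g t) + norm (h t)) ^ 2"
      by (simp add: norm_triangle_ineq power_mono)
    also have "\<dots> \<le> 2 * norm (g t) ^ 2 + 2 * norm (h t) ^ 2"
      using sum_squares_bound[of "norm (g t)" "norm (h t)"] by (simp add: power2_sum)
    finally show ?thesis .
  qed
  have "integrable M (\<lambda>t. norm (g t + h t) ^ 2)"
  proof (rule Bochner_Integration.integrable_bound)
    show "integrable M (\<lambda>t. 2 * norm (g t) ^ 2 + 2 * norm (h t) ^ 2)"
      using L2_D(2)[OF assms(1)] L2_D(2)[OF assms(2)] by simp
    show "AE t in M. norm (norm (g t + h t) ^ 2) \<le> norm (2 * norm (g t) ^ 2 + 2 * norm (h t) ^ 2)"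
      using bound by simp
  qed measurable
  then show ?thesis by (simp add: L2_def)
qed

lemma L2_diff: "g \<in> L2 M \<Longrightarrow> h \<in> L2 M \<Longrightarrow> (\<lambda>t. g t - h t) \<in> L2 M"
  using L2_add[OF _ L2_scaleV, of g M h "-1"] by (simp add: vector_sneg_minus1[symmetric])

lemma L2_zero: "(\<lambda>t. 0) \<in> L2 M"
  by (simp add: L2_def)

lemma L2_sum: "(\<And>i. i \<in> I \<Longrightarrow> g i \<in> L2 M) \<Longrightarrow> (\<lambda>t. \<Sum>i\<in>I. g i t) \<in> L2 M"
  by (induction I rule: infinite_finite_induct) (auto intro: L2_add L2_zero)

lemma inner_L2_zero_left[simp]: "inner_L2 M (\<lambda>t. 0) h = 0"
  by (simp add: inner_L2_def cinner_def)

lemma inner_L2_add_left: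
  "g \<in> L2 M \<Longrightarrow> h \<in> L2 M \<Longrightarrow> k \<in> L2 M \<Longrightarrow>
    inner_L2 M (\<lambda>t. g t + h t) k = inner_L2 M g k + inner_L2 M h k"
  by (simp add: inner_L2_def cinner_add_left integrable_cinner_L2)

lemma inner_L2_diff_left:
  "g \<in> L2 M \<Longrightarrow> h \<in> L2 M \<Longrightarrow> k \<in> L2 M \<Longrightarrow>
    inner_L2 M (\<lambda>t. g t - h t) k = inner_L2 M g k - inner_L2 M h k"
  by (simp add: inner_L2_def cinner_diff_left integrable_cinner_L2)

lemma inner_L2_scaleV_left: "inner_L2 M (\<lambda>t. c *s g t) h = c * inner_L2 M g h"
  by (simp add: inner_L2_def cinner_scaleV_left)

lemma inner_L2_sum_left:
  assumes "\<And>i. i \<in> I \<Longrightarrow> g i \<in> L2 M" "h \<in> L2 M"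
  shows "inner_L2 M (\<lambda>t. \<Sum>i\<in>I. g i t) h = (\<Sum>i\<in>I. inner_L2 M (g i) h)"
proof (cases "finite I")
  case True
  then show ?thesis unfolding inner_L2_def cinner_sum_left
    using assms by (intro Bochner_Integration.integral_sum integrable_cinner_L2) auto
qed (simp add: inner_L2_def cinner_def)

lemma inner_L2_commute: "inner_L2 M h g = cnj (inner_L2 M g h)"
  by (simp add: inner_L2_def cinner_commute[of "h _"])

lemma inner_L2_diff_right:
  "g \<in> L2 M \<Longrightarrow> h \<in> L2 M \<Longrightarrow> k \<in> L2 M \<Longrightarrow>
    inner_L2 M k (\<lambda>t. g t - h t) = inner_L2 M k g - inner_L2 M k h"
  by (subst (1 2 3) inner_L2_commute) (simp add: inner_L2_diff_left)

lemma inner_L2_scaleV_right: "inner_L2 M g (\<lambda>t. c *s h t) = cnj c * inner_L2 M g h"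
  by (subst (1 2) inner_L2_commute) (simp add: inner_L2_scaleV_left)

lemma norm_L2_nonneg[simp]: "0 \<le> norm_L2 M h"
  by (simp add: norm_L2_def integral_nonneg_AE)

lemma inner_L2_self: "inner_L2 M h h = of_real (norm_L2 M h ^ 2)"
  by (simp add: inner_L2_def norm_L2_def cinner_self integral_nonneg_AE del: of_real_power)

lemma norm_L2_scaleV: "norm_L2 M (\<lambda>t. c *s h t) = cmod c * norm_L2 M h"
  by (simp add: norm_L2_def norm_scaleV power_mult_distrib real_sqrt_mult)

lemma norm_L2_minus_commute: "norm_L2 M (\<lambda>t. g t - h t) = norm_L2 M (\<lambda>t. h t - g t)"
  by (simp add: norm_L2_def norm_minus_commute)

lemma norm_L2_diff_scaleV_sq:
  assumes g: "g \<in> L2 M" and h: "h \<in> L2 M"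
  shows "norm_L2 M (\<lambda>t. g t - c *s h t) ^ 2
    = norm_L2 M g ^ 2 - 2 * Re (cnj c * inner_L2 M g h) + (cmod c)\<^sup>2 * norm_L2 M h ^ 2"
proof -
  have ch: "(\<lambda>t. c *s h t) \<in> L2 M" using h by (rule L2_scaleV)
  have "complex_of_real (norm_L2 M (\<lambda>t. g t - c *s h t) ^ 2)
      = inner_L2 M (\<lambda>t. g t - c *s h t) (\<lambda>t. g t - c *s h t)"
    by (simp add: inner_L2_self)
  also have "\<dots> = inner_L2 M g g - (cnj c * inner_L2 M g h + cnj (cnj c * inner_L2 M g h))
      + c * cnj c * inner_L2 M h h"
    using g h ch L2_diff[OF g ch]
    by (simp add: inner_L2_diff_left inner_L2_diff_right inner_L2_scaleV_left
        inner_L2_scaleV_right inner_L2_commute[of M h g] algebra_simps)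
  also have "\<dots> = complex_of_real (norm_L2 M g ^ 2 - 2 * Re (cnj c * inner_L2 M g h)
      + (cmod c)\<^sup>2 * norm_L2 M h ^ 2)"
    by (subst complex_add_cnj) (simp add: inner_L2_self complex_norm_square del: of_real_power)
  finally show ?thesis
    using of_real_eq_iff by blast
qed

lemma norm_L2_add_le:
  assumes g: "g \<in> L2 M" and h: "h \<in> L2 M"
  shows "norm_L2 M (\<lambda>t. g t + h t) \<le> norm_L2 M g + norm_L2 M h"
proof (rule power2_le_imp_le)
  have "norm_L2 M (\<lambda>t. g t + h t) ^ 2 = norm_L2 M g ^ 2 + 2 * Re (inner_L2 M g h) + norm_L2 M h ^ 2"
    using norm_L2_diff_scaleV_sq[OF g h, of "-1"] by (simp add: vector_sneg_minus1[symmetric])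
  also have "\<dots> \<le> norm_L2 M g ^ 2 + 2 * (norm_L2 M g * norm_L2 M h) + norm_L2 M h ^ 2"
    using complex_Re_le_cmod[of "inner_L2 M g h"] norm_inner_L2_le[OF g h] by simp
  also have "\<dots> = (norm_L2 M g + norm_L2 M h) ^ 2"
    by (simp add: power2_sum)
  finally show "norm_L2 M (\<lambda>t. g t + h t) ^ 2 \<le> (norm_L2 M g + norm_L2 M h) ^ 2" .
qed simp

lemma norm_L2_triangle:
  assumes "a \<in> L2 M" "b \<in> L2 M" "c \<in> L2 M"
  shows "norm_L2 M (\<lambda>t. a t - c t) \<le> norm_L2 M (\<lambda>t. a t - b t) + norm_L2 M (\<lambda>t. b t - c t)"
  using norm_L2_add_le[OF L2_diff[OF assms(1,2)] L2_diff[OF assms(2,3)]] by simp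

lemma norm_L2_parallelogram:
  assumes g: "g \<in> L2 M" and h: "h \<in> L2 M"
  shows "norm_L2 M (\<lambda>t. g t + h t) ^ 2 + norm_L2 M (\<lambda>t. g t - h t) ^ 2
    = 2 * norm_L2 M g ^ 2 + 2 * norm_L2 M h ^ 2"
  using norm_L2_diff_scaleV_sq[OF g h, of "-1"] norm_L2_diff_scaleV_sq[OF g h, of 1]
  by (simp add: vector_sneg_minus1[symmetric])

definition L2_closure :: "'a measure \<Rightarrow> ('a \<Rightarrow> complex^'n) set \<Rightarrow> ('a \<Rightarrow> complex^'n) set" where
  "L2_closure M W = {g \<in> L2 M. \<forall>e>0. \<exists>w\<in>W. norm_L2 M (\<lambda>t. g t - w t) < e}"

definition L2_orthogonal :: "'a measure \<Rightarrow> ('a \<Rightarrow> complex^'n) set \<Rightarrow> ('a \<Rightarrow> complex^'n) set" where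
  "L2_orthogonal M W = {h \<in> L2 M. \<forall>w\<in>W. inner_L2 M h w = 0}"

definition L2_subspace :: "'a measure \<Rightarrow> ('a \<Rightarrow> complex^'n) set \<Rightarrow> bool" where
  "L2_subspace M W \<longleftrightarrow> W \<subseteq> L2 M \<and> (\<lambda>t. 0) \<in> W \<and> (\<forall>g\<in>W. \<forall>h\<in>W. (\<lambda>t. g t + h t) \<in> W)
     \<and> (\<forall>c. \<forall>g\<in>W. (\<lambda>t. c *s g t) \<in> W)"

lemma L2_subspaceD:
  assumes "L2_subspace M W"
  shows "W \<subseteq> L2 M" "(\<lambda>t. 0) \<in> W"
    and "g \<in> W \<Longrightarrow> h \<in> W \<Longrightarrow> (\<lambda>t. g t + h t) \<in> W"
    and "g \<in> W \<Longrightarrow> (\<lambda>t. c *s g t) \<in> W"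
  using assms unfolding L2_subspace_def by auto

lemma L2_subspace_diff:
  assumes "L2_subspace M W" "g \<in> W" "h \<in> W"
  shows "(\<lambda>t. g t - h t) \<in> W"
  using L2_subspaceD(3)[OF assms(1,2) L2_subspaceD(4)[OF assms(1,3), of "-1"]]
  by (simp add: vector_sneg_minus1[symmetric])

lemma L2_subspace_sum:
  assumes "L2_subspace M V" "\<And>i. i \<in> I \<Longrightarrow> g i \<in> V"
  shows "(\<lambda>t. \<Sum>i\<in>I. g i t) \<in> V"
  using assms(2)
proof (induction I rule: infinite_finite_induct)
  case (insert i I)
  then show ?case
    using L2_subspaceD(3)[OF assms(1)] by simp
qed (simp_all add: L2_subspaceD(2)[OF assms(1)])

lemma L2_closure_mono: "W \<subseteq> V \<Longrightarrow> L2_closure M W \<subseteq> L2_closure M V"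
  unfolding L2_closure_def by blast

lemma inner_L2_closure_eq_0:
  assumes g: "g \<in> L2_closure M W" and "W \<subseteq> L2 M" "h \<in> L2 M"
    and orth: "\<And>w. w \<in> W \<Longrightarrow> inner_L2 M w h = 0"
  shows "inner_L2 M g h = 0"
proof (rule ccontr)
  assume ne: "inner_L2 M g h \<noteq> 0"
  define e where "e = norm (inner_L2 M g h) / (norm_L2 M h + 1)"
  have "e > 0" using ne by (simp add: e_def add_nonneg_pos)
  then obtain w where w: "w \<in> W" "norm_L2 M (\<lambda>t. g t - w t) < e"
    using g by (auto simp: L2_closure_def)
  have L2: "g \<in> L2 M" "w \<in> L2 M" "h \<in> L2 M"
    using assms w by (auto simp: L2_closure_def)
  have "norm (inner_L2 M g h) = norm (inner_L2 M (\<lambda>t. g t - w t) h)"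
    using L2 orth[OF w(1)] by (simp add: inner_L2_diff_left)
  also have "\<dots> \<le> norm_L2 M (\<lambda>t. g t - w t) * norm_L2 M h"
    using L2 by (intro norm_inner_L2_le L2_diff)
  also have "\<dots> \<le> e * norm_L2 M h"
    using w(2) by (intro mult_right_mono) auto
  also have "\<dots> < norm (inner_L2 M g h)"
  proof -
    have "0 < norm_L2 M h + 1" by (simp add: add_nonneg_pos)
    then show ?thesis using ne by (simp add: e_def field_simps)
  qed
  finally show False by simp
qed

lemma L2_closure_orthogonal:
  assumes "W \<subseteq> L2 M" "g \<in> L2_closure M W" "h \<in> L2_orthogonal M W"
  shows "inner_L2 M g h = 0"
  using assms inner_L2_commute[of M h]
  by (intro inner_L2_closure_eq_0[of g M W h]) (auto simp: L2_orthogonal_def)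

lemma inner_L2_eq_0_if_minimal:
  assumes q: "q \<in> L2 M" and x: "x \<in> L2 M"
    and min: "\<And>c. norm_L2 M q \<le> norm_L2 M (\<lambda>t. q t - c *s x t)"
  shows "inner_L2 M q x = 0"
proof (rule ccontr)
  define \<beta> where "\<beta> = inner_L2 M q x"
  assume "inner_L2 M q x \<noteq> 0"
  then have B: "(cmod \<beta>)\<^sup>2 > 0"
    by (simp add: \<beta>_def)
  define B where "B = (cmod \<beta>)\<^sup>2"
  define s where "s = 1 / (norm_L2 M x ^ 2 + 1)"
  have s: "s > 0" "s * norm_L2 M x ^ 2 < 1"
    by (simp_all add: s_def add_nonneg_pos)
  have re: "Re (cnj (of_real s * \<beta>) * \<beta>) = s * B"
  proof -
    have "cnj (of_real s * \<beta>) * \<beta> = of_real s * (cnj \<beta> * \<beta>)"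
      by simp
    also have "cnj \<beta> * \<beta> = of_real B"
      by (simp add: B_def complex_norm_square mult.commute del: of_real_power)
    finally show ?thesis
      by (metis Re_complex_of_real of_real_mult)
  qed
  have nm: "(cmod (of_real s * \<beta>))\<^sup>2 = s\<^sup>2 * B"
    using s by (simp add: B_def norm_mult power_mult_distrib)
  txt \<open>Moving from \<open>q\<close> a small step in the direction of \<open>x\<close> decreases the norm to first order.\<close>
  have "norm_L2 M q ^ 2 \<le> norm_L2 M (\<lambda>t. q t - (of_real s * \<beta>) *s x t) ^ 2"
    using min by (simp add: power_mono)
  also have "\<dots> = norm_L2 M q ^ 2 - 2 * (s * B) + s\<^sup>2 * B * norm_L2 M x ^ 2"
    unfolding norm_L2_diff_scaleV_sq[OF q x] \<beta>_def[symmetric] re nm ..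
  finally have "2 * (s * B) \<le> (s * norm_L2 M x ^ 2) * (s * B)"
    by (simp add: power2_eq_square algebra_simps)
  also have "\<dots> < 1 * (s * B)"
    using s B by (intro mult_strict_right_mono) (auto simp: B_def)
  finally show False
    using s B by (simp add: B_def)
qed

lemma norm_L2_diff_le_near_minimal:
  assumes W: "L2_subspace M W" and g: "g \<in> L2 M" and w: "w1 \<in> W" "w2 \<in> W"
    and d: "\<And>v. v \<in> W \<Longrightarrow> d \<le> norm_L2 M (\<lambda>t. g t - v t) ^ 2"
  shows "norm_L2 M (\<lambda>t. w1 t - w2 t) ^ 2 + 4 * d
    \<le> 2 * norm_L2 M (\<lambda>t. g t - w1 t) ^ 2 + 2 * norm_L2 M (\<lambda>t. g t - w2 t) ^ 2"
proof -
  define a where "a t = g t - w1 t" for t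
  define b where "b t = g t - w2 t" for t
  define mid where "mid t = (1/2 :: complex) *s (w1 t + w2 t)" for t
  have "w1 \<in> L2 M" "w2 \<in> L2 M"
    using w L2_subspaceD(1)[OF W] by auto
  then have L2: "a \<in> L2 M" "b \<in> L2 M"
    unfolding a_def b_def by (simp_all add: L2_diff g)
  have "mid \<in> W"
    using w W unfolding mid_def by (intro L2_subspaceD(3,4))
  txt \<open>The midpoint of \<open>w1\<close> and \<open>w2\<close> lies in \<open>W\<close>, so it is no closer to \<open>g\<close> than \<open>d\<close> allows.\<close>
  then have "4 * d \<le> norm_L2 M (\<lambda>t. a t + b t) ^ 2"
  proof -
    have "(\<lambda>t. a t + b t) = (\<lambda>t. (2::complex) *s (g t - mid t))"
      by (auto simp: a_def b_def mid_def vec_eq_iff algebra_simps)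
    then have "norm_L2 M (\<lambda>t. a t + b t) = 2 * norm_L2 M (\<lambda>t. g t - mid t)"
      by (simp only: norm_L2_scaleV) simp
    then show ?thesis
      using d[OF \<open>mid \<in> W\<close>] by (simp add: power_mult_distrib)
  qed
  moreover have "norm_L2 M (\<lambda>t. a t - b t) ^ 2 = norm_L2 M (\<lambda>t. w1 t - w2 t) ^ 2"
    by (subst norm_L2_minus_commute) (simp add: a_def b_def)
  ultimately show ?thesis
    using norm_L2_parallelogram[OF L2] unfolding a_def[symmetric] b_def[symmetric] by linarith
qed

definition lincomb :: "('s::finite \<Rightarrow> nat \<Rightarrow> 'a \<Rightarrow> complex^'n) \<Rightarrow> nat \<Rightarrow> ('s \<Rightarrow> nat \<Rightarrow> complex)
    \<Rightarrow> 'a \<Rightarrow> complex^'n" where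
  "lincomb X N c = (\<lambda>t. \<Sum>i\<in>UNIV. \<Sum>k<N. c i k *s X i k t)"

definition lincombs :: "('s::finite \<Rightarrow> nat \<Rightarrow> 'a \<Rightarrow> complex^'n) \<Rightarrow> ('a \<Rightarrow> complex^'n) set" where
  "lincombs X = {lincomb X N c | N c. True}"

lemma lincombs_subset:
  assumes "L2_subspace M V" "\<And>i k. X i k \<in> V"
  shows "lincombs X \<subseteq> V"
proof -
  have "lincomb X N c \<in> V" for N c
  proof -
    have "(\<lambda>t. \<Sum>k<N. c i k *s X i k t) \<in> V" for i
      using L2_subspaceD(4)[OF assms] by (rule L2_subspace_sum[OF assms(1)])
    then show ?thesis
      unfolding lincomb_def by (rule L2_subspace_sum[OF assms(1)])
  qed
  then show ?thesis
    by (auto simp: lincombs_def)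
qed

lemma lincomb_pad:
  assumes "N \<le> N'"
  shows "lincomb X N c = lincomb X N' (\<lambda>i k. if k < N then c i k else 0)"
proof -
  have "(\<Sum>k<N. c i k *s X i k t) = (\<Sum>k<N'. (if k < N then c i k else 0) *s X i k t)" for i t
    using assms by (intro sum.mono_neutral_cong_left) auto
  then show ?thesis
    unfolding lincomb_def by (intro ext) (simp only:)
qed

lemma lincomb_add:
  "(\<lambda>t. lincomb X N c t + lincomb X N' c' t)
    = lincomb X (max N N') (\<lambda>i k. (if k < N then c i k else 0) + (if k < N' then c' i k else 0))"
  by (subst (1 2) lincomb_pad[of _ "max N N'"])
    (simp_all add: lincomb_def sum.distrib del: max.bounded_iff)

lemma lincomb_scaleV: "(\<lambda>t. a *s lincomb X N c t) = lincomb X N (\<lambda>i k. a * c i k)"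
  by (simp add: lincomb_def fun_eq_iff vec_eq_iff sum_distrib_left mult.assoc)

lemma lincomb_in_lincombs[simp]: "lincomb X N c \<in> lincombs X"
  by (auto simp: lincombs_def)

lemma generator_in_lincombs: "X i k \<in> lincombs X"
proof -
  define c where "c i' k' = (if i' = i \<and> k' = k then 1 else (0::complex))" for i' k'
  have "(\<Sum>k'<Suc k. c i' k' *s X i' k' t) = (if i' = i then X i k t else 0)" for i' t
  proof -
    have "c i' k' *s X i' k' t = (if k' = k then (if i' = i then X i k t else 0) else 0)" for k'
      by (simp add: c_def)
    then show ?thesis
      by simp
  qed
  then have "lincomb X (Suc k) c = X i k"
    by (simp add: lincomb_def)
  then show ?thesis
    using lincomb_in_lincombs by metis
qed

lemma L2_subspace_lincombs:
  assumes "\<And>i k. X i k \<in> L2 M"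
  shows "L2_subspace M (lincombs X)"
proof -
  have "L2_subspace M (L2 M)"
    by (simp add: L2_subspace_def L2_zero L2_add L2_scaleV)
  then have "lincombs X \<subseteq> L2 M"
    using assms by (rule lincombs_subset)
  moreover have "(\<lambda>t. 0) \<in> lincombs X"
  proof -
    have "(\<lambda>t. 0) = lincomb X 0 c" for c
      by (simp add: lincomb_def)
    then show ?thesis
      by (auto simp: lincombs_def)
  qed
  moreover have "(\<lambda>t. g t + h t) \<in> lincombs X" "(\<lambda>t. a *s g t) \<in> lincombs X"
    if gh: "g \<in> lincombs X" "h \<in> lincombs X" for g h a
  proof -
    obtain N c N' c' where "g = lincomb X N c" "h = lincomb X N' c'"
      using gh by (auto simp: lincombs_def)
    then show "(\<lambda>t. g t + h t) \<in> lincombs X" "(\<lambda>t. a *s g t) \<in> lincombs X"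
      by (simp_all add: lincomb_add lincomb_scaleV)
  qed
  ultimately show ?thesis
    unfolding L2_subspace_def by blast
qed

lemma L2_orthogonal_lincombs:
  assumes "\<And>i k. X i k \<in> L2 M"
  shows "h \<in> L2_orthogonal M (lincombs X) \<longleftrightarrow> h \<in> L2 M \<and> (\<forall>i k. inner_L2 M h (X i k) = 0)"
proof
  assume "h \<in> L2 M \<and> (\<forall>i k. inner_L2 M h (X i k) = 0)"
  then have h: "h \<in> L2 M" and orth: "\<And>i k. inner_L2 M (X i k) h = 0"
    using inner_L2_commute[of M _ h] by auto
  have "inner_L2 M (lincomb X N c) h = 0" for N c
    unfolding lincomb_def using assms h
    by (simp add: inner_L2_sum_left L2_sum L2_scaleV inner_L2_scaleV_left orth)
  then show "h \<in> L2_orthogonal M (lincombs X)"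
    using h inner_L2_commute[of M h] by (auto simp: L2_orthogonal_def lincombs_def)
qed (auto simp: L2_orthogonal_def generator_in_lincombs)

section \<open>Completeness and orthogonal projection\<close>

lemma nn_integral_norm_sq_L2:
  assumes "h \<in> L2 M"
  shows "(\<integral>\<^sup>+t. ennreal (norm (h t) ^ 2) \<partial>M) = ennreal (norm_L2 M h ^ 2)"
  using assms by (simp add: L2_def norm_L2_def nn_integral_eq_integral integral_nonneg_AE)

lemma L2_Fatou:
  assumes g: "\<And>i. g i \<in> L2 M" and [measurable]: "G \<in> borel_measurable M"
    and lim: "AE t in M. (\<lambda>i. g i t) \<longlonglongrightarrow> G t"
    and bound: "eventually (\<lambda>i. norm_L2 M (g i) \<le> e) sequentially"
  shows "G \<in> L2 M \<and> norm_L2 M G \<le> e"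
proof -
  have [measurable]: "g i \<in> borel_measurable M" for i
    using g by (simp add: L2_def)
  obtain N where "norm_L2 M (g N) \<le> e"
    using bound eventually_sequentially by auto
  then have e: "0 \<le> e"
    by (rule order.trans[OF norm_L2_nonneg])
  have "(\<integral>\<^sup>+t. ennreal (norm (G t) ^ 2) \<partial>M) = (\<integral>\<^sup>+t. liminf (\<lambda>i. ennreal (norm (g i t) ^ 2)) \<partial>M)"
    using lim
    by (intro nn_integral_cong_AE, eventually_elim)
      (auto intro!: lim_imp_Liminf[symmetric] tendsto_power tendsto_norm)
  also have "\<dots> \<le> liminf (\<lambda>i. \<integral>\<^sup>+t. ennreal (norm (g i t) ^ 2) \<partial>M)"
    by (rule nn_integral_liminf) measurable
  also have "\<dots> \<le> ennreal (e ^ 2)"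
    using bound e
    by (intro Liminf_le) (auto elim!: eventually_mono simp: nn_integral_norm_sq_L2[OF g] power_mono)
  finally have fin: "(\<integral>\<^sup>+t. ennreal (norm (G t) ^ 2) \<partial>M) \<le> ennreal (e ^ 2)" .
  then have int: "integrable M (\<lambda>t. norm (G t) ^ 2)"
    by (auto simp: integrable_iff_bounded le_less_trans)
  then have "G \<in> L2 M"
    by (simp add: L2_def)
  moreover have "norm_L2 M G ^ 2 \<le> e ^ 2"
    using fin e by (simp add: nn_integral_norm_sq_L2[OF \<open>G \<in> L2 M\<close>])
  ultimately show ?thesis
    using e power2_le_imp_le by blast
qed

lemma L2_diff_ae_limit_le:
  fixes u :: "nat \<Rightarrow> 'a \<Rightarrow> complex^'n" and r :: "nat \<Rightarrow> nat"
  assumes u: "\<And>n. u n \<in> L2 M" and r: "strict_mono r"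
    and lim: "AE t in M. (\<lambda>i. u (r i) t) \<longlonglongrightarrow> v t"
    and N: "\<forall>m\<ge>N. \<forall>n\<ge>N. norm_L2 M (\<lambda>t. u m t - u n t) < e" and "n \<ge> N"
    and [measurable]: "v \<in> borel_measurable M"
  shows "(\<lambda>t. u n t - v t) \<in> L2 M \<and> norm_L2 M (\<lambda>t. u n t - v t) \<le> e"
proof (rule L2_Fatou)
  show "(\<lambda>i t. u n t - u (r i) t) i \<in> L2 M" for i
    by (rule L2_diff[OF u u])
  show "AE t in M. (\<lambda>i. u n t - u (r i) t) \<longlonglongrightarrow> u n t - v t"
    using lim by eventually_elim (intro tendsto_intros)
  have "norm_L2 M (\<lambda>t. u n t - u (r i) t) \<le> e" if "i \<ge> N" for i
  proof -
    have "N \<le> r i"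
      using seq_suble[OF r, of i] that by linarith
    then show ?thesis
      using N \<open>n \<ge> N\<close> by (simp add: less_imp_le)
  qed
  then show "eventually (\<lambda>i. norm_L2 M (\<lambda>t. u n t - u (r i) t) \<le> e) sequentially"
    by (auto simp: eventually_sequentially)
  have [measurable]: "u n \<in> borel_measurable M"
    using u by (simp add: L2_def)
  show "(\<lambda>t. u n t - v t) \<in> borel_measurable M"
    by measurable
qed

lemma L2_minimizing_sequence_Cauchy:
  assumes W: "L2_subspace M W" and g: "g \<in> L2 M" and w: "\<And>n. w n \<in> W"
    and d: "\<And>v. v \<in> W \<Longrightarrow> d \<le> norm_L2 M (\<lambda>t. g t - v t) ^ 2"
    and w_lt: "\<And>n. norm_L2 M (\<lambda>t. g t - w n t) ^ 2 < d + \<epsilon> n" and \<epsilon>: "\<epsilon> \<longlonglongrightarrow> 0"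
    and "e > 0"
  shows "\<exists>N. \<forall>m\<ge>N. \<forall>n\<ge>N. norm_L2 M (\<lambda>t. w m t - w n t) < e"
proof -
  have "0 < e\<^sup>2 / 4"
    using \<open>e > 0\<close> by simp
  with \<epsilon> have "eventually (\<lambda>n. \<epsilon> n < e\<^sup>2 / 4) sequentially"
    by (rule order_tendstoD(2))
  then obtain N where N: "\<And>n. n \<ge> N \<Longrightarrow> \<epsilon> n < e\<^sup>2 / 4"
    unfolding eventually_sequentially by blast
  have "norm_L2 M (\<lambda>t. w m t - w n t) < e" if "m \<ge> N" "n \<ge> N" for m n
  proof (rule power2_less_imp_less)
    show "norm_L2 M (\<lambda>t. w m t - w n t) ^ 2 < e\<^sup>2"
      using norm_L2_diff_le_near_minimal[OF W g w w d, of m n] w_lt[of m] w_lt[of n]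
        N[OF \<open>m \<ge> N\<close>] N[OF \<open>n \<ge> N\<close>]
      by linarith
  qed (use \<open>e > 0\<close> in simp)
  then show ?thesis by blast
qed

lemma L2_minimizing_limit_le:
  assumes g: "g \<in> L2 M" and wL: "\<And>n. w n \<in> L2 M"
    and w_lt: "\<And>n. norm_L2 M (\<lambda>t. g t - w n t) ^ 2 < d + \<epsilon> n" and \<epsilon>: "\<epsilon> \<longlonglongrightarrow> 0"
    and p: "p \<in> L2 M" and lim: "(\<lambda>n. norm_L2 M (\<lambda>t. w n t - p t)) \<longlonglongrightarrow> 0"
  shows "norm_L2 M (\<lambda>t. g t - p t) \<le> sqrt d"
proof (rule LIMSEQ_le_const)
  show "(\<lambda>n. sqrt (d + \<epsilon> n) + norm_L2 M (\<lambda>t. w n t - p t)) \<longlonglongrightarrow> sqrt d"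
    using tendsto_add[OF tendsto_real_sqrt[OF tendsto_add[OF tendsto_const \<epsilon>]] lim] by simp
  have "norm_L2 M (\<lambda>t. g t - p t) \<le> sqrt (d + \<epsilon> n) + norm_L2 M (\<lambda>t. w n t - p t)" for n
  proof -
    have "norm_L2 M (\<lambda>t. g t - w n t) \<le> sqrt (d + \<epsilon> n)"
      using w_lt[of n] by (intro real_le_rsqrt) simp
    then show ?thesis
      using norm_L2_triangle[OF g wL[of n] p] by simp
  qed
  then show "\<exists>N. \<forall>n\<ge>N. norm_L2 M (\<lambda>t. g t - p t) \<le> sqrt (d + \<epsilon> n) + norm_L2 M (\<lambda>t. w n t - p t)"
    by blast
qed

lemma L2_minimizing_limit_ge:
  assumes W: "L2_subspace M W" and g: "g \<in> L2 M" and w: "\<And>n. w n \<in> W"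
    and d: "\<And>v. v \<in> W \<Longrightarrow> d \<le> norm_L2 M (\<lambda>t. g t - v t) ^ 2"
    and p: "p \<in> L2 M" and lim: "(\<lambda>n. norm_L2 M (\<lambda>t. w n t - p t)) \<longlonglongrightarrow> 0"
    and v: "v \<in> W"
  shows "sqrt d \<le> norm_L2 M (\<lambda>t. g t - p t - v t)"
proof (rule LIMSEQ_le_const)
  have WL: "\<And>w. w \<in> W \<Longrightarrow> w \<in> L2 M"
    using L2_subspaceD(1)[OF W] by blast
  show "(\<lambda>n. norm_L2 M (\<lambda>t. g t - p t - v t) + norm_L2 M (\<lambda>t. w n t - p t))
      \<longlonglongrightarrow> norm_L2 M (\<lambda>t. g t - p t - v t)"
    using tendsto_add[OF tendsto_const lim] by simp
  have "sqrt d \<le> norm_L2 M (\<lambda>t. g t - p t - v t) + norm_L2 M (\<lambda>t. w n t - p t)" for n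
  proof -
    have "(\<lambda>t. w n t + v t) \<in> W"
      using L2_subspaceD(3)[OF W w v] .
    then have "sqrt d \<le> norm_L2 M (\<lambda>t. g t - (w n t + v t))"
      using d by (intro real_le_lsqrt) auto
    also have "\<dots> \<le> norm_L2 M (\<lambda>t. g t - p t - v t) + norm_L2 M (\<lambda>t. p t - w n t)"
      using norm_L2_triangle[OF L2_diff[OF g WL[OF v]] p WL[OF w]] by (simp add: algebra_simps)
    finally show ?thesis
      by (simp add: norm_L2_minus_commute[of M p])
  qed
  then show "\<exists>N. \<forall>n\<ge>N. sqrt d \<le> norm_L2 M (\<lambda>t. g t - p t - v t) + norm_L2 M (\<lambda>t. w n t - p t)"
    by blast
qed

context finite_measure
begin

lemma L2_const: "(\<lambda>t. v) \<in> L2 M"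
  by (simp add: L2_def)

lemma integrable_L2:
  assumes "h \<in> L2 M"
  shows "integrable M h"
proof -
  have "integrable M (\<lambda>t. norm (h t) * 1)"
    using assms by (intro Cauchy_Schwarz_integral(1)) (auto simp: L2_def)
  then show ?thesis
    using assms by (simp add: integrable_norm_iff L2_def)
qed

lemma integral_norm_le_norm_L2:
  assumes "h \<in> L2 M"
  shows "(\<integral>t. norm (h t) \<partial>M) \<le> norm_L2 M h * sqrt (measure M (space M))"
proof -
  have "(\<integral>t. norm (h t) * 1 \<partial>M) \<le> sqrt (\<integral>t. norm (h t) ^ 2 \<partial>M) * sqrt (\<integral>t. 1 ^ 2 \<partial>M)"
    using assms by (intro Cauchy_Schwarz_integral(2)) (auto simp: L2_def)
  then show ?thesis
    by (simp add: norm_L2_def)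
qed

lemma L2_Cauchy_imp_L1_Cauchy:
  assumes u: "\<And>n. u n \<in> L2 M"
    and Cauchy: "\<And>e. e > 0 \<Longrightarrow> \<exists>N. \<forall>m\<ge>N. \<forall>n\<ge>N. norm_L2 M (\<lambda>t. u m t - u n t) < e"
    and "e > 0"
  shows "\<exists>N. \<forall>i\<ge>N. \<forall>j\<ge>N. (\<integral>t. norm (u i t - u j t) \<partial>M) < e"
proof -
  define C where "C = sqrt (measure M (space M)) + 1"
  have C: "0 < C" "sqrt (measure M (space M)) < C"
    by (simp_all add: C_def add_nonneg_pos)
  obtain N where N: "\<forall>m\<ge>N. \<forall>n\<ge>N. norm_L2 M (\<lambda>t. u m t - u n t) < e / C"
    using Cauchy[of "e / C"] \<open>e > 0\<close> C by auto
  have "(\<integral>t. norm (u i t - u j t) \<partial>M) < e" if "i \<ge> N" "j \<ge> N" for i j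
  proof -
    have "(\<integral>t. norm (u i t - u j t) \<partial>M) \<le> norm_L2 M (\<lambda>t. u i t - u j t) * sqrt (measure M (space M))"
      using u by (intro integral_norm_le_norm_L2 L2_diff)
    also have "\<dots> \<le> e / C * sqrt (measure M (space M))"
      using N that by (intro mult_right_mono) (auto intro: less_imp_le)
    also have "\<dots> < e / C * C"
      using C \<open>e > 0\<close> by (intro mult_strict_left_mono) auto
    finally show ?thesis
      using C by simp
  qed
  then show ?thesis by blast
qed

text \<open>Riesz--Fischer: an L2-Cauchy sequence is L1-Cauchy, so a subsequence converges almost
  everywhere, and Fatou's lemma bounds the L2-distance to the pointwise limit.\<close>

lemma L2_complete:
  assumes u: "\<And>n. u n \<in> L2 M"
    and Cauchy: "\<And>e. e > 0 \<Longrightarrow> \<exists>N. \<forall>m\<ge>N. \<forall>n\<ge>N. norm_L2 M (\<lambda>t. u m t - u n t) < e"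
  shows "\<exists>v\<in>L2 M. (\<lambda>n. norm_L2 M (\<lambda>t. u n t - v t)) \<longlonglongrightarrow> 0"
proof -
  have [measurable]: "u n \<in> borel_measurable M" for n
    using u by (simp add: L2_def)
  obtain r where r: "strict_mono r" and "AE t in M. Cauchy (\<lambda>i. u (r i) t)"
    using cauchy_L1_AE_cauchy_subseq[OF integrable_L2[OF u] L2_Cauchy_imp_L1_Cauchy[OF u Cauchy]] by blast
  define v where "v t = lim (\<lambda>i. u (r i) t)" for t
  have [measurable]: "v \<in> borel_measurable M"
    unfolding v_def by measurable
  have lim: "AE t in M. (\<lambda>i. u (r i) t) \<longlonglongrightarrow> v t"
    using \<open>AE t in M. Cauchy (\<lambda>i. u (r i) t)\<close>
    by eventually_elim (simp add: v_def Cauchy_convergent_iff convergent_LIMSEQ_iff)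
  have close: "(\<lambda>t. u n t - v t) \<in> L2 M \<and> norm_L2 M (\<lambda>t. u n t - v t) \<le> e"
    if "\<forall>m\<ge>N. \<forall>n\<ge>N. norm_L2 M (\<lambda>t. u m t - u n t) < e" "n \<ge> N" for n N e
    using u r lim that by (rule L2_diff_ae_limit_le) measurable
  obtain N1 where "\<forall>m\<ge>N1. \<forall>n\<ge>N1. norm_L2 M (\<lambda>t. u m t - u n t) < 1"
    using Cauchy[of 1] by auto
  then have "(\<lambda>t. u N1 t - v t) \<in> L2 M"
    using close[of N1 1 N1] by simp
  then have "(\<lambda>t. u N1 t - (u N1 t - v t)) \<in> L2 M"
    by (rule L2_diff[OF u])
  then have "v \<in> L2 M"
    by simp
  moreover have "(\<lambda>n. norm_L2 M (\<lambda>t. u n t - v t)) \<longlonglongrightarrow> 0"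
  proof (rule LIMSEQ_I)
    fix e :: real
    assume "e > 0"
    then obtain N where "\<forall>m\<ge>N. \<forall>n\<ge>N. norm_L2 M (\<lambda>t. u m t - u n t) < e / 2"
      using Cauchy[of "e / 2"] by auto
    then have "norm (norm_L2 M (\<lambda>t. u n t - v t) - 0) < e" if "n \<ge> N" for n
      using close[of N "e / 2" n] that \<open>e > 0\<close> by simp
    then show "\<exists>N. \<forall>n\<ge>N. norm (norm_L2 M (\<lambda>t. u n t - v t) - 0) < e"
      by blast
  qed
  ultimately show ?thesis by blast
qed

lemma L2_best_approximation:
  assumes W: "L2_subspace M W" and g: "g \<in> L2 M"
  obtains p where "p \<in> L2_closure M W"
    and "\<And>v. v \<in> W \<Longrightarrow> norm_L2 M (\<lambda>t. g t - p t) \<le> norm_L2 M (\<lambda>t. g t - p t - v t)"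
proof -
  define d where "d = (INF v\<in>W. norm_L2 M (\<lambda>t. g t - v t) ^ 2)"
  define \<epsilon> where "\<epsilon> n = 1 / real (Suc n)" for n
  have bdd: "bdd_below ((\<lambda>v. norm_L2 M (\<lambda>t. g t - v t) ^ 2) ` W)"
    by (rule bdd_belowI[of _ 0]) auto
  have d_le: "d \<le> norm_L2 M (\<lambda>t. g t - v t) ^ 2" if "v \<in> W" for v
    unfolding d_def using bdd that by (rule cINF_lower)
  have \<epsilon>: "\<epsilon> \<longlonglongrightarrow> 0"
    using LIMSEQ_Suc[OF lim_const_over_n[of 1]] by (simp add: \<epsilon>_def[abs_def])
  have "\<exists>v\<in>W. norm_L2 M (\<lambda>t. g t - v t) ^ 2 < d + \<epsilon> n" for n
    using L2_subspaceD(2)[OF W] bdd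
    by (subst cINF_less_iff[symmetric]) (auto simp: d_def \<epsilon>_def)
  then obtain w where w: "\<And>n. w n \<in> W"
    and w_lt: "\<And>n. norm_L2 M (\<lambda>t. g t - w n t) ^ 2 < d + \<epsilon> n"
    by metis
  have wL: "w n \<in> L2 M" for n
    using w L2_subspaceD(1)[OF W] by blast
  obtain p where p: "p \<in> L2 M" and lim: "(\<lambda>n. norm_L2 M (\<lambda>t. w n t - p t)) \<longlonglongrightarrow> 0"
    using L2_complete[of w, OF wL L2_minimizing_sequence_Cauchy[OF W g w d_le w_lt \<epsilon>]] by blast
  have "\<exists>v\<in>W. norm_L2 M (\<lambda>t. p t - v t) < e" if "e > 0" for e
    using LIMSEQ_D[OF lim that] w by (auto simp: norm_L2_minus_commute[of M p])
  with p have "p \<in> L2_closure M W"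
    by (simp add: L2_closure_def)
  moreover have "norm_L2 M (\<lambda>t. g t - p t) \<le> norm_L2 M (\<lambda>t. g t - p t - v t)" if "v \<in> W" for v
    using L2_minimizing_limit_le[OF g wL w_lt \<epsilon> p lim] L2_minimizing_limit_ge[OF W g w d_le p lim that]
    by (rule order.trans)
  ultimately show ?thesis
    using that by blast
qed

lemma L2_projection:
  assumes W: "L2_subspace M W" and g: "g \<in> L2 M"
  obtains p where "p \<in> L2_closure M W" and "\<And>w. w \<in> W \<Longrightarrow> inner_L2 M (\<lambda>t. g t - p t) w = 0"
proof -
  obtain p where p: "p \<in> L2_closure M W"
    and best: "\<And>w. w \<in> W \<Longrightarrow> norm_L2 M (\<lambda>t. g t - p t) \<le> norm_L2 M (\<lambda>t. g t - p t - w t)"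
    using L2_best_approximation[OF W g] by blast
  have "inner_L2 M (\<lambda>t. g t - p t) w = 0" if w: "w \<in> W" for w
  proof (rule inner_L2_eq_0_if_minimal)
    show "(\<lambda>t. g t - p t) \<in> L2 M"
      using p by (intro L2_diff[OF g]) (simp add: L2_closure_def)
    show "w \<in> L2 M"
      using w L2_subspaceD(1)[OF W] by blast
    show "norm_L2 M (\<lambda>t. g t - p t) \<le> norm_L2 M (\<lambda>t. g t - p t - c *s w t)" for c
      using best[OF L2_subspaceD(4)[OF W w]] .
  qed
  with p show ?thesis
    using that by blast
qed

lemma L2_orthogonal_orthogonal_subset_closure:
  assumes W: "L2_subspace M W" and H: "L2_subspace M H" and closure_H: "L2_closure M W \<subseteq> H"
  shows "H \<inter> L2_orthogonal M (H \<inter> L2_orthogonal M W) \<subseteq> L2_closure M W"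
proof
  fix g
  assume g: "g \<in> H \<inter> L2_orthogonal M (H \<inter> L2_orthogonal M W)"
  then have gL: "g \<in> L2 M"
    by (simp add: L2_orthogonal_def)
  obtain p where p: "p \<in> L2_closure M W" and orth: "\<And>w. w \<in> W \<Longrightarrow> inner_L2 M (\<lambda>t. g t - p t) w = 0"
    using L2_projection[OF W gL] by blast
  have pL: "p \<in> L2 M"
    using p by (simp add: L2_closure_def)
  define q where "q t = g t - p t" for t
  have qL: "q \<in> L2 M"
    unfolding q_def using gL pL by (rule L2_diff)
  txt \<open>The residual \<open>q\<close> is orthogonal to \<open>W\<close> and lies in \<open>H\<close>; being orthogonal both to \<open>g\<close>
    and to \<open>p\<close>, it vanishes.\<close>
  have q: "q \<in> H \<inter> L2_orthogonal M W"
    using g closure_H p orth qL unfolding q_def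
    by (auto simp: L2_orthogonal_def intro: L2_subspace_diff[OF H])
  have "complex_of_real (norm_L2 M q ^ 2) = inner_L2 M g q - inner_L2 M p q"
    unfolding inner_L2_self[symmetric] by (rule inner_L2_diff_left[OF gL pL qL, folded q_def])
  also have "\<dots> = 0"
    using g q L2_closure_orthogonal[OF L2_subspaceD(1)[OF W] p] by (auto simp: L2_orthogonal_def)
  finally have q0: "norm_L2 M q = 0"
    by simp
  have "\<exists>w\<in>W. norm_L2 M (\<lambda>t. g t - w t) < e" if "e > 0" for e
  proof -
    obtain w where w: "w \<in> W" "norm_L2 M (\<lambda>t. p t - w t) < e"
      using p \<open>e > 0\<close> by (auto simp: L2_closure_def)
    have "norm_L2 M (\<lambda>t. g t - w t) \<le> norm_L2 M q + norm_L2 M (\<lambda>t. p t - w t)"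
      unfolding q_def using gL pL L2_subspaceD(1)[OF W] w(1) by (intro norm_L2_triangle) auto
    then have "norm_L2 M (\<lambda>t. g t - w t) < e"
      using w(2) q0 by linarith
    with w(1) show ?thesis
      by blast
  qed
  with gL show "g \<in> L2_closure M W"
    by (simp add: L2_closure_def)
qed

theorem L2_closure_eq_orthogonal_orthogonal:
  assumes W: "L2_subspace M W" and H: "L2_subspace M H" "L2_closure M H \<subseteq> H" and "W \<subseteq> H"
  shows "L2_closure M W = H \<inter> L2_orthogonal M (H \<inter> L2_orthogonal M W)"
proof
  have closure_H: "L2_closure M W \<subseteq> H"
    using L2_closure_mono[OF \<open>W \<subseteq> H\<close>] H(2) by blast
  then show "L2_closure M W \<subseteq> H \<inter> L2_orthogonal M (H \<inter> L2_orthogonal M W)"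
    using L2_closure_orthogonal[OF L2_subspaceD(1)[OF W]]
    by (auto simp: L2_orthogonal_def L2_closure_def)
  show "H \<inter> L2_orthogonal M (H \<inter> L2_orthogonal M W) \<subseteq> L2_closure M W"
    by (rule L2_orthogonal_orthogonal_subset_closure[OF W H(1) closure_H])
qed

end

section \<open>The Hardy space of the circle\<close>

definition circle_measure :: "real measure" where
  "circle_measure = restrict_space lborel circ"

lemma circ_sets[measurable]: "circ \<in> sets lborel" "circ \<in> sets borel"
  by (simp_all add: circ_def)

lemma set_integral_circ:
  fixes g :: "real \<Rightarrow> 'b::{banach, second_countable_topology}"
  shows "(LINT t:circ|lborel. g t) = (\<integral>t. g t \<partial>circle_measure)"
  unfolding circle_measure_def set_lebesgue_integral_def
  by (subst integral_restrict_space) auto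

lemma Lp_circ_iff:
  "Lp_circ p h \<longleftrightarrow> h \<in> borel_measurable circle_measure \<and> integrable circle_measure (\<lambda>t. norm (h t) ^ p)"
  unfolding Lp_circ_def set_borel_measurable_def circle_measure_def
  by (subst borel_measurable_restrict_space_iff) (auto simp: set_integrable_eq)

lemma L2_circle_measure: "Lp_circ 2 h \<longleftrightarrow> h \<in> L2 circle_measure"
  by (simp add: Lp_circ_iff L2_def)

interpretation circle: finite_measure circle_measure
  by (rule finite_measureI) (simp add: circle_measure_def circ_def emeasure_restrict_space)

lemma borel_measurable_circle_continuous:
  "continuous_on UNIV f \<Longrightarrow> f \<in> borel_measurable circle_measure"
  unfolding circle_measure_def
  by (intro measurable_restrict_space1) (simp add: borel_measurable_continuous_onI)

lemma borel_measurable_exp_circle[measurable]: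
  "(\<lambda>t. exp (c * complex_of_real t)) \<in> borel_measurable circle_measure"
  by (intro borel_measurable_circle_continuous continuous_intros)

lemma ip2_eq_inner_L2: "ip2 g h = inner_L2 circle_measure g h / (2 * pi)"
  by (simp add: ip2_def inner_L2_def cinner_def set_integral_circ)

lemma dist2_eq_norm_L2: "dist2 g h = norm_L2 circle_measure (\<lambda>t. g t - h t) / sqrt (2 * pi)"
  by (simp add: dist2_def norm_L2_def set_integral_circ real_sqrt_divide)

lemma integral_exp_circle:
  "(\<integral>t. exp (\<i> * of_int m * of_real t) \<partial>circle_measure) = (if m = 0 then 2 * pi else 0)"
proof -
  have "set_integrable lborel circ (\<lambda>t. exp (\<i> * of_int m * of_real t))"
    unfolding set_integrable_def circ_def
    by (intro borel_integrable_compact continuous_intros) auto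
  then have "(\<integral>t. exp (\<i> * of_int m * of_real t) \<partial>circle_measure)
      = integral {0..2*pi} (\<lambda>t. exp (\<i> * of_int m * of_real t))"
    by (simp add: set_integral_circ[symmetric] set_borel_integral_eq_integral circ_def)
  also have "\<dots> = (if m = 0 then 2 * pi else 0)"
  proof (cases "m = 0")
    case False
    then have "integral {0..2*pi} (\<lambda>t. exp (\<i> * of_int m * of_real t))
        = (exp (\<i> * of_int m * of_real (2*pi)) - 1) / (\<i> * of_int m)"
      using Kronecker_Approximation_Theorem.integral_exp[of "2*pi" "\<i> * of_int m"] by simp
    moreover have "exp (\<i> * of_int m * of_real (2*pi)) = 1"
      using exp_integer_2pi[of "of_int m"] by (simp add: mult_ac)
    ultimately show ?thesis
      using False by simp
  qed (simp add: scaleR_conv_of_real)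
  finally show ?thesis .
qed

definition fourier_mode :: "int \<Rightarrow> 'n::finite \<Rightarrow> real \<Rightarrow> complex^'n" where
  "fourier_mode k j t = exp (\<i> * of_int k * of_real t) *s axis j 1"

lemma cinner_fourier_mode: "cinner x (fourier_mode k j t) = x $ j * exp (- \<i> * of_int k * of_real t)"
proof -
  have "cinner x (fourier_mode k j t) = x $ j * cnj (exp (\<i> * of_int k * of_real t))"
    unfolding cinner_def fourier_mode_def by (simp add: axis_def if_distrib cong: if_cong)
  then show ?thesis
    by (simp add: exp_cnj)
qed

lemma L2_fourier_mode: "fourier_mode k j \<in> L2 circle_measure"
  unfolding fourier_mode_def[abs_def]
  by (rule L2_mult[OF circle.L2_const, where B = 1]) auto

lemma vfcoeff_eq_inner_L2: "vfcoeff h k $ j = inner_L2 circle_measure h (fourier_mode k j) / (2 * pi)"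
  by (simp add: vfcoeff_def fcoeff_def inner_L2_def set_integral_circ cinner_fourier_mode)

lemma Hp2_iff:
  "h \<in> Hp 2 \<longleftrightarrow> h \<in> L2 circle_measure \<and> (\<forall>k<0. \<forall>j. inner_L2 circle_measure h (fourier_mode k j) = 0)"
  by (auto simp: Hp_def L2_circle_measure vec_eq_iff vfcoeff_eq_inner_L2)

lemma Hp2_subspace: "L2_subspace circle_measure (Hp 2 :: (real \<Rightarrow> complex^'n::finite) set)"
proof -
  have "Hp 2 \<subseteq> (L2 circle_measure :: (real \<Rightarrow> complex^'n) set)"
    and "(\<lambda>t. 0) \<in> (Hp 2 :: (real \<Rightarrow> complex^'n) set)"
    by (auto simp: Hp2_iff L2_zero)
  moreover have "(\<lambda>t. g t + h t) \<in> Hp 2" if "g \<in> Hp 2" "h \<in> Hp 2" for g h :: "real \<Rightarrow> complex^'n"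
    using that by (simp add: Hp2_iff L2_add inner_L2_add_left L2_fourier_mode)
  moreover have "(\<lambda>t. c *s g t) \<in> Hp 2" if "g \<in> Hp 2" for c and g :: "real \<Rightarrow> complex^'n"
    using that by (simp add: Hp2_iff L2_scaleV inner_L2_scaleV_left)
  ultimately show ?thesis
    unfolding L2_subspace_def by blast
qed

lemma Hp2_closed: "L2_closure circle_measure (Hp 2) \<subseteq> (Hp 2 :: (real \<Rightarrow> complex^'n::finite) set)"
proof
  fix g :: "real \<Rightarrow> complex^'n"
  assume g: "g \<in> L2_closure circle_measure (Hp 2)"
  have "inner_L2 circle_measure g (fourier_mode k j) = 0" if "k < 0" for k j
    by (intro inner_L2_closure_eq_0[OF g L2_subspaceD(1)[OF Hp2_subspace] L2_fourier_mode])
      (use that in \<open>simp add: Hp2_iff\<close>)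
  with g show "g \<in> Hp 2"
    by (simp add: Hp2_iff L2_closure_def)
qed

section \<open>The backward shift\<close>

definition mult_char :: "int \<Rightarrow> (real \<Rightarrow> complex^'n) \<Rightarrow> real \<Rightarrow> complex^'n" where
  "mult_char m h t = exp (\<i> * of_int m * of_real t) *s h t"

lemma L2_mult_char: "h \<in> L2 circle_measure \<Longrightarrow> mult_char m h \<in> L2 circle_measure"
  unfolding mult_char_def[abs_def]
  by (rule L2_mult[where B = 1]) (auto intro: borel_measurable_exp_circle)

lemma mult_char_mult_char: "mult_char a (mult_char b h) = mult_char (a + b) h"
  by (auto simp: mult_char_def algebra_simps simp flip: exp_add)

lemma cinner_mult_char_left:
  "cinner (mult_char m h t) x = exp (\<i> * of_int m * of_real t) * cinner (h t) x"
  by (simp add: mult_char_def cinner_scaleV_left)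

lemma inner_L2_mult_char_fourier_mode:
  "inner_L2 circle_measure (mult_char m h) (fourier_mode k j)
    = inner_L2 circle_measure h (fourier_mode (k - m) j)"
proof -
  have "cinner (mult_char m h t) (fourier_mode k j t) = cinner (h t) (fourier_mode (k - m) j t)" for t
  proof -
    have "cinner (mult_char m h t) (fourier_mode k j t)
        = h t $ j * (exp (\<i> * of_int m * of_real t) * exp (- \<i> * of_int k * of_real t))"
      by (simp add: cinner_fourier_mode mult_char_def mult_ac)
    also have "exp (\<i> * of_int m * of_real t) * exp (- \<i> * of_int k * of_real t)
        = exp (- \<i> * of_int (k - m) * of_real t)"
      by (simp add: algebra_simps flip: exp_add)
    finally show ?thesis
      by (simp only: cinner_fourier_mode)
  qed
  then show ?thesis
    by (simp add: inner_L2_def)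
qed

lemma inner_L2_mult_char_right:
  "inner_L2 circle_measure g (mult_char m h) = inner_L2 circle_measure (mult_char (- m) g) h"
proof -
  have "cinner (g t) (mult_char m h t) = cinner (mult_char (- m) g t) (h t)" for t
    by (simp add: mult_char_def cinner_scaleV_left cinner_commute[of "g t"] exp_cnj)
  then show ?thesis
    by (simp add: inner_L2_def)
qed

lemma mult_char_Hp2:
  assumes "m \<ge> 0" "h \<in> Hp 2"
  shows "mult_char m h \<in> Hp 2"
  using assms by (simp add: Hp2_iff L2_mult_char inner_L2_mult_char_fourier_mode)

lemma inner_L2_const_fourier_mode:
  "inner_L2 circle_measure (\<lambda>t. c) (fourier_mode k j) = (if k = 0 then 2 * pi * c $ j else 0)"
proof -
  have "inner_L2 circle_measure (\<lambda>t. c) (fourier_mode k j)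
      = c $ j * (\<integral>t. exp (\<i> * of_int (- k) * of_real t) \<partial>circle_measure)"
    by (simp add: inner_L2_def cinner_fourier_mode)
  also have "\<dots> = c $ j * (if - k = 0 then 2 * pi else 0)"
    by (simp only: integral_exp_circle)
  finally show ?thesis
    by simp
qed

lemma inner_L2_const_right:
  assumes "u \<in> L2 circle_measure"
  shows "inner_L2 circle_measure u (\<lambda>t. c)
    = (\<Sum>j\<in>UNIV. cnj (c $ j) * inner_L2 circle_measure u (fourier_mode 0 j))"
proof -
  have "cinner (u t) c = (\<Sum>j\<in>UNIV. cnj (c $ j) * cinner (u t) (fourier_mode 0 j t))" for t
    unfolding cinner_fourier_mode by (simp add: cinner_def mult.commute)
  then show ?thesis
    using assms by (simp add: inner_L2_def integrable_cinner_L2 L2_fourier_mode)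
qed

lemma Sstar_eq_mult_char: "Sstar v = (\<lambda>t. mult_char (-1) v t - mult_char (-1) (\<lambda>_. vfcoeff v 0) t)"
  by (simp add: Sstar_def mult_char_def)

lemma Sstar_Hp2:
  assumes v: "v \<in> Hp 2"
  shows "Sstar v \<in> Hp 2"
proof -
  have vL: "v \<in> L2 circle_measure"
    using v by (simp add: Hp2_iff)
  have "inner_L2 circle_measure (Sstar v) (fourier_mode k j)
      = inner_L2 circle_measure v (fourier_mode (k + 1) j)
        - (if k + 1 = 0 then inner_L2 circle_measure v (fourier_mode 0 j) else 0)" for k j
    using vL unfolding Sstar_eq_mult_char
    by (simp add: inner_L2_diff_left L2_mult_char circle.L2_const L2_fourier_mode
        inner_L2_mult_char_fourier_mode inner_L2_const_fourier_mode vfcoeff_eq_inner_L2)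
  then show ?thesis
    using v vL unfolding Sstar_eq_mult_char
    by (auto simp: Hp2_iff L2_diff L2_mult_char circle.L2_const)
qed

lemma inner_L2_Sstar:
  assumes h: "h \<in> Hp 2" and v: "v \<in> L2 circle_measure"
  shows "inner_L2 circle_measure h (Sstar v) = inner_L2 circle_measure (mult_char 1 h) v"
proof -
  have hL: "h \<in> L2 circle_measure"
    using h by (simp add: Hp2_iff)
  txt \<open>The constant term removed by \<open>S\<^sup>*\<close> is orthogonal to \<open>z h\<close>, which has no constant term.\<close>
  have "inner_L2 circle_measure (mult_char 1 h) (fourier_mode 0 j) = 0" for j
    using h by (simp add: inner_L2_mult_char_fourier_mode Hp2_iff)
  then have "inner_L2 circle_measure (mult_char 1 h) (\<lambda>_. vfcoeff v 0) = 0"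
    by (simp add: inner_L2_const_right L2_mult_char hL)
  then show ?thesis
    using hL v unfolding Sstar_eq_mult_char
    by (simp add: inner_L2_diff_right L2_mult_char circle.L2_const inner_L2_mult_char_right)
qed

lemma Sstar_pow_Hp2: "v \<in> Hp 2 \<Longrightarrow> (Sstar ^^ m) v \<in> Hp 2"
  by (induction m) (simp_all add: Sstar_Hp2)

lemma inner_L2_Sstar_pow:
  assumes "h \<in> Hp 2" "v \<in> Hp 2"
  shows "inner_L2 circle_measure h ((Sstar ^^ m) v) = inner_L2 circle_measure (mult_char (int m) h) v"
  using assms(1)
proof (induction m arbitrary: h)
  case 0
  then show ?case
    by (simp add: mult_char_def)
next
  case (Suc m)
  have "inner_L2 circle_measure h ((Sstar ^^ Suc m) v)
      = inner_L2 circle_measure (mult_char 1 h) ((Sstar ^^ m) v)"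
    using Suc.prems Sstar_pow_Hp2[OF assms(2)] by (simp add: inner_L2_Sstar Hp2_iff)
  also have "\<dots> = inner_L2 circle_measure (mult_char (int m) (mult_char 1 h)) v"
    using Suc.prems by (intro Suc.IH mult_char_Hp2) auto
  finally show ?case
    by (simp add: mult_char_mult_char add.commute)
qed

section \<open>The kernel of the Hankel operator\<close>

lemma zbarFstar_mult_nth: "(zbarFstar f t *v h t) $ i = exp (- \<i> * of_real t) * cinner (h t) (f i t)"
  unfolding matrix_vector_mult_def zbarFstar_def Fmat_def cinner_def
  by (simp add: sum_distrib_left mult_ac)

lemma inner_L2_mult_char_eq_fcoeff:
  "inner_L2 circle_measure (mult_char m h) v = 2 * pi * fcoeff (\<lambda>t. cinner (h t) (v t)) (- m)"
  by (simp add: inner_L2_def fcoeff_def set_integral_circ cinner_mult_char_left mult_ac)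

lemma Lp_circ_zbarFstar_mult:
  assumes f: "\<And>i. f i \<in> Hp 2" and h: "h \<in> Hp 2"
  shows "Lp_circ 1 (\<lambda>t. zbarFstar f t *v h t)"
proof -
  define G where "G i t = cinner (h t) (f i t)" for i t
  have G_int: "integrable circle_measure (G i)" for i
    unfolding G_def using f h by (intro integrable_cinner_L2) (auto simp: Hp2_iff)
  then have [measurable]: "G i \<in> borel_measurable circle_measure" for i
    by auto
  have [measurable]: "(\<lambda>t. exp (- \<i> * of_real t)) \<in> borel_measurable circle_measure"
    by (rule borel_measurable_exp_circle)
  have nth: "(zbarFstar f t *v h t) $ i = exp (- \<i> * of_real t) * G i t" for t i
    unfolding G_def by (rule zbarFstar_mult_nth)
  have meas: "(\<lambda>t. zbarFstar f t *v h t) \<in> borel_measurable circle_measure"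
    by (intro borel_measurable_vec) (unfold nth, measurable)
  show ?thesis
    unfolding Lp_circ_iff
  proof (intro conjI meas, rule Bochner_Integration.integrable_bound)
    show "integrable circle_measure (\<lambda>t. \<Sum>i\<in>UNIV. norm (G i t))"
      using G_int by auto
    have "norm (zbarFstar f t *v h t) \<le> (\<Sum>i\<in>UNIV. norm (G i t))" for t
      using L2_set_le_sum[of UNIV "\<lambda>i. norm ((zbarFstar f t *v h t) $ i)"]
      by (simp add: norm_vec_def nth norm_mult)
    then show "AE t in circle_measure. norm (norm (zbarFstar f t *v h t) ^ 1) \<le> norm (\<Sum>i\<in>UNIV. norm (G i t))"
      by (simp add: sum_nonneg)
  qed (use meas in measurable)
qed

lemma vfcoeff_zbarFstar_mult:
  "vfcoeff (\<lambda>t. zbarFstar f t *v h t) k $ i = fcoeff (\<lambda>t. cinner (h t) (f i t)) (k + 1)"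
proof -
  have "(zbarFstar f t *v h t) $ i * exp (- \<i> * of_int k * of_real t)
      = cinner (h t) (f i t) * exp (- \<i> * of_int (k + 1) * of_real t)" for t
    unfolding zbarFstar_mult_nth by (simp add: algebra_simps flip: exp_add)
  then show ?thesis
    by (simp add: vfcoeff_def fcoeff_def)
qed

lemma all_neg_shift_iff: "(\<forall>k::int<0. a (k + 1) = 0) \<longleftrightarrow> (\<forall>m::nat. a (- int m) = 0)"
proof (intro iffI allI impI)
  fix m :: nat
  assume "\<forall>k<0. a (k + 1) = 0"
  moreover have "- int m - 1 < 0"
    by simp
  ultimately have "a (- int m - 1 + 1) = 0"
    by blast
  then show "a (- int m) = 0"
    by simp
next
  fix k :: int
  assume "\<forall>m::nat. a (- int m) = 0" "k < 0"
  moreover have "k + 1 = - int (nat (- (k + 1)))"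
    using \<open>k < 0\<close> by simp
  ultimately show "a (k + 1) = 0"
    by (metis (no_types))
qed

lemma kerHankel_iff:
  assumes f: "\<And>i. f i \<in> Hp 2" and h: "h \<in> Hp 2"
  shows "h \<in> kerHankel (zbarFstar f) \<longleftrightarrow> (\<forall>i m. inner_L2 circle_measure h ((Sstar ^^ m) (f i)) = 0)"
proof -
  have "h \<in> kerHankel (zbarFstar f) \<longleftrightarrow> (\<lambda>t. zbarFstar f t *v h t) \<in> Hp 1"
    using h by (simp add: kerHankel_def)
  also have "\<dots> \<longleftrightarrow> (\<forall>k<0. \<forall>i. fcoeff (\<lambda>t. cinner (h t) (f i t)) (k + 1) = 0)"
    using Lp_circ_zbarFstar_mult[of f, OF f h] by (simp add: Hp_def vec_eq_iff vfcoeff_zbarFstar_mult)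
  also have "\<dots> \<longleftrightarrow> (\<forall>i. \<forall>k<0. fcoeff (\<lambda>t. cinner (h t) (f i t)) (k + 1) = 0)"
    by blast
  also have "\<dots> \<longleftrightarrow> (\<forall>i m. fcoeff (\<lambda>t. cinner (h t) (f i t)) (- int m) = 0)"
    by (simp add: all_neg_shift_iff)
  also have "\<dots> \<longleftrightarrow> (\<forall>i m. inner_L2 circle_measure h ((Sstar ^^ m) (f i)) = 0)"
    using f h by (simp add: inner_L2_Sstar_pow inner_L2_mult_char_eq_fcoeff)
  finally show ?thesis .
qed

lemma all_pos_ex_less_divide_iff:
  fixes s :: real
  assumes "s > 0"
  shows "(\<forall>\<epsilon>>0. \<exists>x. f x / s < \<epsilon>) \<longleftrightarrow> (\<forall>e>0. \<exists>x. f x < e)"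
proof (intro iffI allI impI)
  fix e :: real
  assume "\<forall>\<epsilon>>0. \<exists>x. f x / s < \<epsilon>" "e > 0"
  moreover have "e / s > 0"
    using assms \<open>e > 0\<close> by simp
  ultimately obtain x where "f x / s < e / s"
    by blast
  then show "\<exists>x. f x < e"
    using assms by (auto simp: divide_less_cancel)
next
  fix \<epsilon> :: real
  assume "\<forall>e>0. \<exists>x. f x < e" "\<epsilon> > 0"
  moreover have "\<epsilon> * s > 0"
    using assms \<open>\<epsilon> > 0\<close> by simp
  ultimately obtain x where "f x < \<epsilon> * s"
    by blast
  then show "\<exists>x. f x / s < \<epsilon>"
    using assms by (auto simp: divide_less_eq)
qed

lemma Estar_eq_L2_closure:
  assumes f: "\<And>i. f i \<in> Hp 2"
  shows "Estar f = L2_closure circle_measure (lincombs (\<lambda>i k. (Sstar ^^ k) (f i)))"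
proof -
  define X where "X i k = (Sstar ^^ k) (f i)" for i k
  have "lincombs X \<subseteq> Hp 2"
    unfolding X_def using Hp2_subspace Sstar_pow_Hp2[OF f] by (rule lincombs_subset)
  then have closure_H2: "L2_closure circle_measure (lincombs X) \<subseteq> Hp 2"
    using L2_closure_mono Hp2_closed by blast
  have ex_lincombs: "(\<exists>w\<in>lincombs X. P w) \<longleftrightarrow> (\<exists>N c. P (lincomb X N c))" for P
    by (auto simp: lincombs_def)
  have "(\<forall>\<epsilon>>0. \<exists>N c. dist2 g (lincomb X N c) < \<epsilon>)
      \<longleftrightarrow> (\<forall>e>0. \<exists>w\<in>lincombs X. norm_L2 circle_measure (\<lambda>t. g t - w t) < e)" for g
    using all_pos_ex_less_divide_iff[of "sqrt (2 * pi)"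
        "\<lambda>(N, c). norm_L2 circle_measure (\<lambda>t. g t - lincomb X N c t)"]
    by (simp add: ex_lincombs dist2_eq_norm_L2)
  moreover have "Estar f = {g \<in> Hp 2. \<forall>\<epsilon>>0. \<exists>N c. dist2 g (lincomb X N c) < \<epsilon>}"
    by (simp add: Estar_def lincomb_def X_def)
  ultimately show ?thesis
    using closure_H2 unfolding X_def[abs_def] by (auto simp: L2_closure_def Hp2_iff)
qed

lemma kerHankel_eq_orthogonal:
  assumes f: "\<And>i. f i \<in> Hp 2"
  shows "kerHankel (zbarFstar f)
    = Hp 2 \<inter> L2_orthogonal circle_measure (lincombs (\<lambda>i k. (Sstar ^^ k) (f i)))"
proof -
  have X: "(Sstar ^^ k) (f i) \<in> L2 circle_measure" for i k
    using Sstar_pow_Hp2[OF f] by (simp add: Hp2_iff)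
  have "h \<in> kerHankel (zbarFstar f)
      \<longleftrightarrow> h \<in> Hp 2 \<and> h \<in> L2_orthogonal circle_measure (lincombs (\<lambda>i k. (Sstar ^^ k) (f i)))" for h
  proof (cases "h \<in> Hp 2")
    case True
    then have "h \<in> L2 circle_measure"
      by (simp add: Hp2_iff)
    with True show ?thesis
      by (simp add: kerHankel_iff[OF f] L2_orthogonal_lincombs[OF X])
  qed (simp add: kerHankel_def)
  then show ?thesis
    by blast
qed

lemma H2_ominus_eq: "H2_ominus K = Hp 2 \<inter> L2_orthogonal circle_measure K"
  by (auto simp: H2_ominus_def L2_orthogonal_def ip2_eq_inner_L2 Hp2_iff)

theorem mainTheorem14:
  fixes f :: "'s::finite \<Rightarrow> real \<Rightarrow> complex^'n"
  assumes "\<forall>i. f i \<in> Hp 2"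
  shows "Estar f = H2_ominus (kerHankel (zbarFstar f))"
proof -
  have f: "\<And>i. f i \<in> Hp 2"
    using assms by blast
  define W where "W = lincombs (\<lambda>i k. (Sstar ^^ k) (f i))"
  have "W \<subseteq> Hp 2"
    unfolding W_def using Hp2_subspace Sstar_pow_Hp2[OF f] by (rule lincombs_subset)
  moreover have "L2_subspace circle_measure W"
    unfolding W_def using Sstar_pow_Hp2[OF f] by (intro L2_subspace_lincombs) (simp add: Hp2_iff)
  ultimately have "L2_closure circle_measure W
      = Hp 2 \<inter> L2_orthogonal circle_measure (Hp 2 \<inter> L2_orthogonal circle_measure W)"
    using circle.L2_closure_eq_orthogonal_orthogonal Hp2_subspace Hp2_closed by blast
  also have "Hp 2 \<inter> L2_orthogonal circle_measure W = kerHankel (zbarFstar f)"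
    unfolding W_def by (rule kerHankel_eq_orthogonal[of f, OF f, symmetric])
  also have "Hp 2 \<inter> L2_orthogonal circle_measure (kerHankel (zbarFstar f)) = H2_ominus (kerHankel (zbarFstar f))"
    by (rule H2_ominus_eq[symmetric])
  finally show ?thesis
    unfolding W_def Estar_eq_L2_closure[of f, OF f] .
qed

end
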